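(* For all $j_1,j_2\in\tfrac12\mathbb{N}^+$: (i) $\widehat R^{(j_1+\frac12,j_2)}=\mathcal{F}^{(j_1+\frac12)}_{12}\widehat R^{(\frac12,j_2)}_{13}\widehat R^{(j_1,j_2)}_{23}\mathcal{E}^{(j_1+\frac12)}_{12}$; (ii) $\widehat R^{(j_1+\frac12,j_2)}=\mathcal{F}^{(j_1+\frac12)}_{12}\widehat R^{(j_1,j_2)}_{23}\widehat R^{(\frac12,j_2)}_{13}\mathcal{E}^{(j_1+\frac12)}_{12}$; where in (i),(ii) the three tensor factors have sizes $2,\,2j_1+1,\,2j_2+1$; (iii) $\widehat R^{(j_1,j_2+\frac12)}=\mathcal{F}^{(j_2+\frac12)}_{23}\widehat R^{(j_1,\frac12)}_{12}\widehat R^{(j_1,j_2)}_{13}\mathcal{E}^{(j_2+\frac12)}_{23}$; (iv) $\widehat R^{(j_1,j_2+\frac12)}=\mathcal{F}^{(j_2+\frac12)}_{23}\widehat R^{(j_1,j_2)}_{13}\widehat R^{(j_1,\frac12)}_{12}\mathcal{E}^{(j_2+\frac12)}_{23}$; where in (iii),(iv) the three tensor factors have sizes $2j_1+1,\,2,\,2j_2+1$.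
   Context: $\mathbb{F}$ is a field of characteristic zero in which every element has a square root; $q\in\mathbb{F}$ is nonzero and not a root of unity, with a fixed square root $q^{1/2}$ ($q^{k/2}:=(q^{1/2})^k$); other $(\cdot)^{1/2}$ are fixed square roots in $\mathbb{F}$. $[n]_q=\frac{q^n-q^{-n}}{q-q^{-1}}$. $\tfrac12\mathbb{N}^+=\{\tfrac12,1,\tfrac32,\dots\}$. $\otimes$ is the Kronecker product, $I_n$ the identity. Leg notation: for factors $\mathbb{F}^{n_1}\otimes\mathbb{F}^{n_2}\otimes\mathbb{F}^{n_3}$, $X_{12}=X\otimes I_{n_3}$, $X_{23}=I_{n_1}\otimes X$, $X_{13}=P(X\otimes I_{n_2})P$ with $P$ the flip of factors 2,3; for non-square $Y$, $Y_{12}=Y\otimes I_{n_3}$, $Y_{23}=I_{n_1}\otimes Y$. For $j\in\tfrac12\mathbb{N}^+$, $\mathcal{E}^{(j+\frac12)}$ is the $(4j+2)\times(2j+2)$ matrix with only nonzero entries $\mathcal{E}_{(a,a)}=\big(\frac{[2j+2-a]_q}{[2j+1]_q}\big)^{1/2}$, $\mathcal{E}_{(a+2j+1,a+1)}=\big(\frac{[a]_q}{[2j+1]_q}\big)^{1/2}$ ($1\le a\le 2j+1$), and $\mathcal{F}^{(j+\frac12)}$ is the $(2j+2)\times(4j+2)$ matrix with only nonzero entries $\mathcal{F}_{(a,a)}=\frac{([2j+2-a]_q[2j+1]_q)^{1/2}}{[2j+2-a]_q+[a-1]_q}$, $\mathcal{F}_{(a+1,a+2j+1)}=\frac{([a]_q[2j+1]_q)^{1/2}}{[2j+1-a]_q+[a]_q}$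 ($1\le a\le 2j+1$); the $4j+2$ side is $\mathbb{F}^2\otimes\mathbb{F}^{2j+1}$. For $j_1,j_2\in\tfrac12\mathbb{N}^+$, $\widehat R^{(j_1,j_2)}=q^{2\,\mathrm{diag}(j_1,j_1-1,\dots,-j_1)\otimes\mathrm{diag}(j_2,j_2-1,\dots,-j_2)}$, the $(2j_1+1)(2j_2+1)$-square diagonal matrix with entries $q^{2\alpha\beta}$. *)

theory Defs
  imports "Jordan_Normal_Form.Matrix"
begin

definition kron :: "'a::semiring_1 mat \<Rightarrow> 'a mat \<Rightarrow> 'a mat" where
  "kron A B = mat (dim_row A * dim_row B) (dim_col A * dim_col B)
     (\<lambda>(i, j). A $$ (i div dim_row B, j div dim_col B) * B $$ (i mod dim_row B, j mod dim_col B))"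

text \<open>Flip of tensor factors 2 and 3: the permutation matrix from
  F^{n1} (x) F^{n2} (x) F^{n3} to F^{n1} (x) F^{n3} (x) F^{n2}, sending
  e_i (x) e_j (x) e_k to e_i (x) e_k (x) e_j.\<close>
definition flip23 :: "nat \<Rightarrow> nat \<Rightarrow> nat \<Rightarrow> 'a::semiring_1 mat" where
  "flip23 n1 n2 n3 = mat (n1 * n3 * n2) (n1 * n2 * n3)
     (\<lambda>(r, c). let i = c div (n2 * n3); j = (c div n3) mod n2; k = c mod n3
              in if r = i * (n3 * n2) + k * n2 + j then 1 else 0)"

definition leg12 :: "nat \<Rightarrow> 'a::semiring_1 mat \<Rightarrow> 'a mat" where
  "leg12 n3 X = kron X (1\<^sub>m n3)"

definition leg23 :: "nat \<Rightarrow> 'a::semiring_1 mat \<Rightarrow> 'a mat" where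
  "leg23 n1 X = kron (1\<^sub>m n1) X"

definition leg13 :: "nat \<Rightarrow> nat \<Rightarrow> nat \<Rightarrow> 'a::semiring_1 mat \<Rightarrow> 'a mat" where
  "leg13 n1 n2 n3 X = flip23 n1 n3 n2 * kron X (1\<^sub>m n2) * flip23 n1 n2 n3"

definition qnum :: "'a::field \<Rightarrow> int \<Rightarrow> 'a" where
  "qnum q n = (q powi n - q powi (- n)) / (q - inverse q)"

text \<open>Spins are encoded as nat: the spin j in 1/2 N^+ is represented by n = 2j \<ge> 1.
  rhalf is the fixed square root q^(1/2); R-hat^(j1,j2) is diagonal of size
  (2j1+1)(2j2+1) with entry q^(2 alpha beta) = (q^(1/2))^(4 alpha beta) at the index
  of (alpha, beta) = (j1 - i, j2 - k), i.e. exponent (n1 - 2i)(n2 - 2k).\<close>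
definition Rhat :: "'a::field \<Rightarrow> nat \<Rightarrow> nat \<Rightarrow> 'a mat" where
  "Rhat rhalf n1 n2 = mat ((n1 + 1) * (n2 + 1)) ((n1 + 1) * (n2 + 1))
     (\<lambda>(r, c). if r = c then rhalf powi ((int n1 - 2 * int (r div (n2 + 1))) *
                                         (int n2 - 2 * int (r mod (n2 + 1))))
              else 0)"

text \<open>E^(j+1/2) for j = n/2, 0-based indices, size (2n+2) x (n+2).
  sq is the fixed square-root choice; (x/y)^(1/2) is read as sq x / sq y.\<close>
definition Emat :: "'a::field \<Rightarrow> ('a \<Rightarrow> 'a) \<Rightarrow> nat \<Rightarrow> 'a mat" where
  "Emat q sq n = mat (2 * n + 2) (n + 2)
     (\<lambda>(r, c). if r \<le> n \<and> c = r then sq (qnum q (int n + 1 - int r)) / sq (qnum q (int n + 1))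
              else if n + 1 \<le> r \<and> c = r - n then sq (qnum q (int r - int n)) / sq (qnum q (int n + 1))
              else 0)"

text \<open>F^(j+1/2) for j = n/2, 0-based indices, size (n+2) x (2n+2).
  ([x][y])^(1/2) is read as sq [x] * sq [y].\<close>
definition Fmat :: "'a::field \<Rightarrow> ('a \<Rightarrow> 'a) \<Rightarrow> nat \<Rightarrow> 'a mat" where
  "Fmat q sq n = mat (n + 2) (2 * n + 2)
     (\<lambda>(r, c). if c \<le> n \<and> r = c then
                 sq (qnum q (int n + 1 - int c)) * sq (qnum q (int n + 1))
                 / (qnum q (int n + 1 - int c) + qnum q (int c))
              else if n + 1 \<le> c \<and> r = c - n then
                 sq (qnum q (int c - int n)) * sq (qnum q (int n + 1))
                 / (qnum q (2 * int n + 1 - int c) + qnum q (int c - int n))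
              else 0)"

end

theory Submission
  imports Defs
begin

text \<open>All R-matrices and their leg embeddings are diagonal in the tensor basis, the entry at
  a basis vector being q^(2 alpha beta) with alpha, beta the weights of its factors.  In (i) and
  (ii) the product of the two R-matrices on F^2 (x) F^(2j1+1) (x) F^(2j2+1) has at
  e_a (x) e_i (x) e_k the entry q^(2 (alpha_a + alpha_i) beta_k), which depends on (a, i) only
  through the total weight, i.e. through a + i.  The embedding E sends e_x to a combination of
  the e_a (x) e_i with a + i = x, so such a diagonal matrix D intertwines:
  D E_12 = E_12 R-hat^(j1+1/2, j2).  Since F is a left inverse of E (an identity between
  q-numbers), F_12 D E_12 = R-hat^(j1+1/2, j2).  Parts (iii) and (iv) are the same argument on
  the second tensor factor.\<close>

lemma sum_lessThan_mult_nat: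
  "(\<Sum>s<m * p. f s) = (\<Sum>u<m. \<Sum>v<p. f (u * p + v :: nat))"
proof -
  have "(\<Sum>s\<in>{u * p..<u * p + p}. f s) = (\<Sum>v<p. f (u * p + v))" for u
    using sum.shift_bounds_nat_ivl[of f 0 "u * p" p]
    by (simp add: atLeast0LessThan add.commute)
  then show ?thesis
    by (simp add: sum.nat_group[symmetric])
qed

lemma mult_add_less_mult_nat:
  fixes u v m p :: nat
  assumes "u < m" "v < p"
  shows "u * p + v < m * p"
proof -
  have "u * p + v < (u + 1) * p" using assms(2) by simp
  also have "\<dots> \<le> m * p" using assms(1) by (intro mult_right_mono) auto
  finally show ?thesis .
qed

lemma index3_less:
  fixes i j k n1 n2 n3 :: nat
  assumes "i < n1" "j < n2" "k < n3"
  shows "i * (n2 * n3) + j * n3 + k < n1 * n2 * n3"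
proof -
  have "j * n3 + k < n2 * n3" using assms(2,3) by (rule mult_add_less_mult_nat)
  then have "i * (n2 * n3) + (j * n3 + k) < n1 * (n2 * n3)"
    by (rule mult_add_less_mult_nat[OF assms(1)])
  then show ?thesis by (simp add: add.assoc mult.assoc)
qed

lemma div_mod_index2:
  fixes i k m :: nat
  assumes "k < m"
  shows "(i * m + k) div m = i" and "(i * m + k) mod m = k"
  using assms by simp_all

lemma div_mod_index3:
  fixes i j k n2 n3 :: nat
  assumes "j < n2" "k < n3"
  defines "c \<equiv> i * (n2 * n3) + j * n3 + k"
  shows "c div n3 = i * n2 + j" and "c mod n3 = k"
    and "c div (n2 * n3) = i" and "c mod (n2 * n3) = j * n3 + k"
proof -
  have c: "c = (i * n2 + j) * n3 + k"
    by (simp add: c_def algebra_simps)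
  show div3: "c div n3 = i * n2 + j" and mod3: "c mod n3 = k"
    unfolding c using assms by simp_all
  have "c div (n3 * n2) = i" and "c mod (n3 * n2) = j * n3 + k"
    unfolding div_mult2_eq mod_mult2_eq div3 mod3 using assms(1) by simp_all
  then show "c div (n2 * n3) = i" and "c mod (n2 * n3) = j * n3 + k"
    by (simp_all add: mult.commute)
qed

lemma less_mult3_cases:
  fixes c n1 n2 n3 :: nat
  assumes "c < n1 * n2 * n3"
  obtains i j k where "i < n1" "j < n2" "k < n3" "c = i * (n2 * n3) + j * n3 + k"
proof
  have "n2 > 0" "n3 > 0" using assms by (auto intro!: Nat.gr0I)
  show "c div (n2 * n3) < n1" using assms by (simp add: less_mult_imp_div_less mult.assoc)
  show "c div n3 mod n2 < n2" "c mod n3 < n3" using \<open>n2 > 0\<close> \<open>n3 > 0\<close> by simp_all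
  have "c = (c div n3 div n2 * n2 + c div n3 mod n2) * n3 + c mod n3"
    by simp
  also have "c div n3 div n2 = c div (n2 * n3)"
    by (simp only: div_mult2_eq[symmetric] mult.commute[of n3 n2])
  finally show "c = c div (n2 * n3) * (n2 * n3) + c div n3 mod n2 * n3 + c mod n3"
    by (simp add: distrib_right mult.assoc)
qed

lemma index_mult_mat_sum:
  assumes "i < dim_row A" "j < dim_col B" "dim_col A = dim_row B"
  shows "(A * B) $$ (i, j) = (\<Sum>r<dim_col A. A $$ (i, r) * B $$ (r, j))"
  using assms by (simp add: scalar_prod_def atLeast0LessThan)

lemma dim_mat_diag [simp]: "dim_row (mat_diag n f) = n" "dim_col (mat_diag n f) = n"
  by (simp_all add: mat_diag_def)

lemma mat_diag_index [simp]:
  "i < n \<Longrightarrow> j < n \<Longrightarrow> mat_diag n f $$ (i, j) = (if i = j then f j else 0)"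
  by (simp add: mat_diag_def)

lemma mat_diag_cong: "(\<And>i. i < n \<Longrightarrow> f i = g i) \<Longrightarrow> mat_diag n f = mat_diag n g"
  by (rule eq_matI) simp_all

lemma dim_kron [simp]:
  "dim_row (kron A B) = dim_row A * dim_row B" "dim_col (kron A B) = dim_col A * dim_col B"
  by (simp_all add: kron_def)

lemma index_kron [simp]:
  "i < dim_row A * dim_row B \<Longrightarrow> j < dim_col A * dim_col B \<Longrightarrow>
   kron A B $$ (i, j) = A $$ (i div dim_row B, j div dim_col B) * B $$ (i mod dim_row B, j mod dim_col B)"
  by (simp add: kron_def)

lemma kron_mult:
  fixes A B C D :: "'a::comm_semiring_1 mat"
  assumes A: "A \<in> carrier_mat na nb" and B: "B \<in> carrier_mat nb nc"
    and C: "C \<in> carrier_mat nd ne" and D: "D \<in> carrier_mat ne nf"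
  shows "kron A C * kron B D = kron (A * B) (C * D)"
proof (rule eq_matI)
  fix i j assume "i < dim_row (kron (A * B) (C * D))" "j < dim_col (kron (A * B) (C * D))"
  then have i: "i < na * nd" and j: "j < nc * nf"
    using A B C D by auto
  then have "nd > 0" "nf > 0"
    by (auto intro!: Nat.gr0I)
  with i j have "i div nd < na" "i mod nd < nd" "j div nf < nc" "j mod nf < nf"
    by (auto simp: less_mult_imp_div_less mult.commute)
  have "(kron A C * kron B D) $$ (i, j) =
      (\<Sum>s<nb * ne. kron A C $$ (i, s) * kron B D $$ (s, j))"
    using A B C D i j by (simp add: scalar_prod_def atLeast0LessThan)
  also have "\<dots> = (\<Sum>u<nb. \<Sum>v<ne. A $$ (i div nd, u) * C $$ (i mod nd, v) *
                                     (B $$ (u, j div nf) * D $$ (v, j mod nf)))"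
    unfolding sum_lessThan_mult_nat
    using A B C D i j
    by (intro sum.cong refl) (simp add: mult_add_less_mult_nat mult.commute[of ne])
  also have "\<dots> = (A * B) $$ (i div nd, j div nf) * (C * D) $$ (i mod nd, j mod nf)"
    using A B C D \<open>i div nd < na\<close> \<open>i mod nd < nd\<close> \<open>j div nf < nc\<close> \<open>j mod nf < nf\<close>
    by (simp add: scalar_prod_def atLeast0LessThan sum_product algebra_simps)
  finally show "(kron A C * kron B D) $$ (i, j) = kron (A * B) (C * D) $$ (i, j)"
    using A B C D i j by simp
qed (use A B C D in auto)

lemma eq_iff_div_mod_eq_nat: "(i :: nat) = j \<longleftrightarrow> i div p = j div p \<and> i mod p = j mod p"
  by (metis div_mult_mod_eq)

lemma kron_mat_diag_one:
  "kron (mat_diag m f) (1\<^sub>m p) = mat_diag (m * p) (\<lambda>s. f (s div p))"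
proof (rule eq_matI)
  fix i j assume "i < dim_row (mat_diag (m * p) (\<lambda>s. f (s div p)))"
    "j < dim_col (mat_diag (m * p) (\<lambda>s. f (s div p)))"
  then have "i < m * p" "j < m * p" "p > 0" by (auto intro!: Nat.gr0I)
  then show "kron (mat_diag m f) (1\<^sub>m p) $$ (i, j) = mat_diag (m * p) (\<lambda>s. f (s div p)) $$ (i, j)"
    using eq_iff_div_mod_eq_nat[of i j p]
    by (auto simp: less_mult_imp_div_less intro!: Nat.gr0I)
qed auto

lemma kron_one_mat_diag:
  "kron (1\<^sub>m p) (mat_diag m f) = mat_diag (p * m) (\<lambda>s. f (s mod m))"
proof (rule eq_matI)
  fix i j assume "i < dim_row (mat_diag (p * m) (\<lambda>s. f (s mod m)))"
    "j < dim_col (mat_diag (p * m) (\<lambda>s. f (s mod m)))"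
  then have "i < p * m" "j < p * m" "m > 0" by (auto intro!: Nat.gr0I)
  then show "kron (1\<^sub>m p) (mat_diag m f) $$ (i, j) = mat_diag (p * m) (\<lambda>s. f (s mod m)) $$ (i, j)"
    using eq_iff_div_mod_eq_nat[of i j m]
    by (auto simp: less_mult_imp_div_less mult.commute intro!: Nat.gr0I)
qed auto

lemma kron_one_one: "kron (1\<^sub>m m) (1\<^sub>m p) = (1\<^sub>m (m * p) :: 'a::semiring_1 mat)"
  using kron_mat_diag_one[of m "\<lambda>_. 1 :: 'a" p] by simp

definition entries_on_graph :: "'a::zero mat \<Rightarrow> (nat \<Rightarrow> nat) \<Rightarrow> bool" where
  "entries_on_graph A \<sigma> \<longleftrightarrow> (\<forall>i < dim_row A. \<forall>j < dim_col A. A $$ (i, j) \<noteq> 0 \<longrightarrow> j = \<sigma> i)"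

lemma entries_on_graph_kron_one_right:
  fixes A :: "'a::semiring_1 mat"
  assumes "entries_on_graph A \<sigma>"
  shows "entries_on_graph (kron A (1\<^sub>m p)) (\<lambda>i. \<sigma> (i div p) * p + i mod p)"
  unfolding entries_on_graph_def
proof (intro allI impI)
  fix i j assume i: "i < dim_row (kron A (1\<^sub>m p))" and j: "j < dim_col (kron A (1\<^sub>m p))"
    and nz: "kron A (1\<^sub>m p) $$ (i, j) \<noteq> 0"
  have "p > 0" using i by (auto intro!: Nat.gr0I)
  with i j have "i div p < dim_row A" "j div p < dim_col A"
    by (auto simp: less_mult_imp_div_less)
  with i j nz assms have "j div p = \<sigma> (i div p)" "j mod p = i mod p"
    by (auto simp: entries_on_graph_def \<open>p > 0\<close> split: if_splits)
  then show "j = \<sigma> (i div p) * p + i mod p"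
    by (metis div_mult_mod_eq)
qed

lemma entries_on_graph_kron_one_left:
  fixes A :: "'a::semiring_1 mat"
  assumes "entries_on_graph A \<sigma>"
  shows "entries_on_graph (kron (1\<^sub>m p) A)
           (\<lambda>i. i div dim_row A * dim_col A + \<sigma> (i mod dim_row A))"
  unfolding entries_on_graph_def
proof (intro allI impI)
  fix i j assume i: "i < dim_row (kron (1\<^sub>m p) A)" and j: "j < dim_col (kron (1\<^sub>m p) A)"
    and nz: "kron (1\<^sub>m p) A $$ (i, j) \<noteq> 0"
  have "dim_row A > 0" "dim_col A > 0" using i j by (auto intro!: Nat.gr0I)
  with i j have "i div dim_row A < p" "j div dim_col A < p"
    by (auto simp: less_mult_imp_div_less mult.commute)
  with i j nz assms have "j div dim_col A = i div dim_row A" "j mod dim_col A = \<sigma> (i mod dim_row A)"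
    by (auto simp: entries_on_graph_def \<open>dim_row A > 0\<close> \<open>dim_col A > 0\<close> split: if_splits)
  then show "j = i div dim_row A * dim_col A + \<sigma> (i mod dim_row A)"
    by (metis div_mult_mod_eq)
qed

lemma mat_diag_comp_mult:
  fixes A :: "'a::comm_semiring_1 mat"
  assumes A: "A \<in> carrier_mat n m" and "entries_on_graph A \<sigma>"
  shows "mat_diag n (\<lambda>i. g (\<sigma> i)) * A = A * mat_diag m g"
  unfolding mat_diag_mult_left[OF A] mat_diag_mult_right[OF A]
  using assms by (intro eq_matI) (auto simp: entries_on_graph_def mult.commute, metis mult_zero_right)

lemma left_inverse_mult_mat_diag_comp_mult:
  fixes F E :: "'a::comm_semiring_1 mat"
  assumes F: "F \<in> carrier_mat m n" and E: "E \<in> carrier_mat n m"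
    and FE: "F * E = 1\<^sub>m m" and graph: "entries_on_graph E \<sigma>"
  shows "F * mat_diag n (\<lambda>i. g (\<sigma> i)) * E = mat_diag m g"
proof -
  have "F * mat_diag n (\<lambda>i. g (\<sigma> i)) * E = F * (mat_diag n (\<lambda>i. g (\<sigma> i)) * E)"
    using F E by (simp add: assoc_mult_mat[of _ m n _ n _ m])
  also have "\<dots> = F * E * mat_diag m g"
    using F E by (simp add: mat_diag_comp_mult[OF E graph] assoc_mult_mat[of _ m n _ m _ m])
  finally show ?thesis
    by (simp add: FE)
qed

definition perm_mat :: "nat \<Rightarrow> nat \<Rightarrow> (nat \<Rightarrow> nat) \<Rightarrow> 'a::semiring_1 mat" where
  "perm_mat m n \<sigma> = mat m n (\<lambda>(r, c). if r = \<sigma> c then 1 else 0)"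

lemma perm_mat_mult_mat_diag_mult_perm_mat:
  assumes "\<And>c. c < n \<Longrightarrow> \<sigma> c < m \<and> \<tau> (\<sigma> c) = c"
  shows "perm_mat n m \<tau> * mat_diag m h * perm_mat m n \<sigma> = mat_diag n (\<lambda>c. h (\<sigma> c))"
proof (rule eq_matI)
  fix a c assume "a < dim_row (mat_diag n (\<lambda>c. h (\<sigma> c)))" "c < dim_col (mat_diag n (\<lambda>c. h (\<sigma> c)))"
  then have a: "a < n" and c: "c < n" by simp_all
  define D where "D = mat m n (\<lambda>(r, c). if r = \<sigma> c then h r else 0)"
  have "mat_diag m h * perm_mat m n \<sigma> = D"
    by (rule eq_matI) (simp_all add: mat_diag_mult_left[of _ m n] perm_mat_def D_def)
  then have "(perm_mat n m \<tau> * mat_diag m h * perm_mat m n \<sigma>) $$ (a, c) = (perm_mat n m \<tau> * D) $$ (a, c)"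
    by (simp add: assoc_mult_mat[of _ n m _ m _ n] perm_mat_def)
  also have "\<dots> = (\<Sum>r<m. perm_mat n m \<tau> $$ (a, r) * D $$ (r, c))"
    using a c by (simp add: index_mult_mat_sum perm_mat_def D_def del: index_mult_mat)
  also have "\<dots> = (\<Sum>r<m. if r = \<sigma> c then (if a = \<tau> r then h r else 0) else 0)"
    using a c by (intro sum.cong) (simp_all add: perm_mat_def D_def)
  also have "\<dots> = (if a = \<tau> (\<sigma> c) then h (\<sigma> c) else 0)"
    using assms[OF c] by simp
  finally show "(perm_mat n m \<tau> * mat_diag m h * perm_mat m n \<sigma>) $$ (a, c) =
      mat_diag n (\<lambda>c. h (\<sigma> c)) $$ (a, c)"
    using assms[OF c] a c by simp
qed (simp_all add: perm_mat_def)

definition swap23_index :: "nat \<Rightarrow> nat \<Rightarrow> nat \<Rightarrow> nat" where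
  "swap23_index n2 n3 c = c div (n2 * n3) * (n3 * n2) + c mod n3 * n2 + c div n3 mod n2"

lemma flip23_eq_perm_mat: "flip23 n1 n2 n3 = perm_mat (n1 * n3 * n2) (n1 * n2 * n3) (swap23_index n2 n3)"
  by (simp add: flip23_def perm_mat_def swap23_index_def Let_def)

lemma swap23_index_index3:
  assumes "j < n2" "k < n3"
  shows "swap23_index n2 n3 (i * (n2 * n3) + j * n3 + k) = i * (n3 * n2) + k * n2 + j"
  using div_mod_index3[OF assms, of i] assms by (simp add: swap23_index_def)

lemma swap23_index_bound_inverse:
  assumes "c < n1 * n2 * n3"
  shows "swap23_index n2 n3 c < n1 * n3 * n2 \<and> swap23_index n3 n2 (swap23_index n2 n3 c) = c"
proof -
  obtain i j k where "i < n1" "j < n2" "k < n3" and c: "c = i * (n2 * n3) + j * n3 + k"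
    using less_mult3_cases[OF assms] .
  then show ?thesis
    unfolding c by (simp add: swap23_index_index3 index3_less)
qed

lemma leg13_mat_diag:
  "leg13 n1 n2 n3 (mat_diag (n1 * n3) f) =
     mat_diag (n1 * n2 * n3) (\<lambda>c. f (c div (n2 * n3) * n3 + c mod n3))"
proof (cases "n2 = 0")
  case False
  have "swap23_index n2 n3 c div n2 = c div (n2 * n3) * n3 + c mod n3" for c
    using False by (simp add: swap23_index_def algebra_simps)
  then show ?thesis
    unfolding leg13_def kron_mat_diag_one flip23_eq_perm_mat
    by (subst perm_mat_mult_mat_diag_mult_perm_mat) (simp_all add: swap23_index_bound_inverse)
qed (rule eq_matI, simp_all add: leg13_def flip23_def)

lemma leg13_carrier_mat: "leg13 n1 n2 n3 X \<in> carrier_mat (n1 * n2 * n3) (n1 * n2 * n3)"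
  by (rule carrier_matI) (simp_all only: leg13_def flip23_def index_mult_mat dim_row_mat dim_col_mat)

lemma qnum_of_nat: "qnum q (int m) = (q ^ m - inverse (q ^ m)) / (q - inverse q)"
  by (simp add: qnum_def power_int_minus)

lemma qnum_zero [simp]: "qnum q 0 = 0"
  by (simp add: qnum_def)

lemma Fmat_carrier: "Fmat q sq n \<in> carrier_mat (n + 2) (2 * (n + 1))"
  by (simp add: Fmat_def)

lemma Emat_carrier: "Emat q sq n \<in> carrier_mat (2 * (n + 1)) (n + 2)"
  by (simp add: Emat_def)

lemma dim_Emat [simp]: "dim_row (Emat q sq n) = 2 * (n + 1)" "dim_col (Emat q sq n) = n + 2"
  using Emat_carrier by auto

text \<open>The index t = a (n + 1) + i of e_a (x) e_i in F^2 (x) F^(n+1) is sent to a + i, the index of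
  the basis vector of F^(n+2) of the same total weight; E and F only connect indices related
  in this way.\<close>
definition fuse_index :: "nat \<Rightarrow> nat \<Rightarrow> nat" where
  "fuse_index n t = t div (n + 1) + t mod (n + 1)"

lemma entries_on_graph_Emat: "entries_on_graph (Emat q sq n) (fuse_index n)"
  unfolding entries_on_graph_def
proof (intro allI impI)
  fix r c assume "r < dim_row (Emat q sq n)" "c < dim_col (Emat q sq n)" "Emat q sq n $$ (r, c) \<noteq> 0"
  then show "c = fuse_index n r"
    by (cases "r \<le> n") (auto simp: Emat_def fuse_index_def le_div_geq le_mod_geq split: if_splits)
qed

text \<open>wt n i is 2 alpha for the i-th basis vector of the spin n/2 module, alpha = n/2 - i.\<close>
definition wt :: "nat \<Rightarrow> nat \<Rightarrow> int" where
  "wt n i = int n - 2 * int i"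

definition Rhat_diag :: "'a::field \<Rightarrow> nat \<Rightarrow> nat \<Rightarrow> nat \<Rightarrow> 'a" where
  "Rhat_diag rhalf n1 n2 r = rhalf powi (wt n1 (r div (n2 + 1)) * wt n2 (r mod (n2 + 1)))"

lemma Rhat_eq_mat_diag: "Rhat rhalf n1 n2 = mat_diag ((n1 + 1) * (n2 + 1)) (Rhat_diag rhalf n1 n2)"
  by (rule eq_matI) (simp_all add: Rhat_def Rhat_diag_def wt_def)

lemma Rhat_diag_index:
  assumes "k < m" and "m = n2 + 1" \<comment> \<open>m is kept separate so that m = n + 2 matches too\<close>
  shows "Rhat_diag rhalf n1 n2 (i * m + k) = rhalf powi (wt n1 i * wt n2 k)"
  unfolding Rhat_diag_def assms(2)[symmetric] div_mod_index2[OF assms(1)] ..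

lemma power_int_wt_fuse:
  fixes r :: "'a::field"
  assumes "r \<noteq> 0"
  shows "r powi (wt 1 e * w) * r powi (wt n i * w) = r powi (wt (n + 1) (e + i) * w)"
    and "r powi (w * wt 1 e) * r powi (w * wt n i) = r powi (w * wt (n + 1) (e + i))"
  using assms by (simp_all add: power_int_add[symmetric] wt_def algebra_simps)

lemma leg13_Rhat_mult_leg23_Rhat:
  fixes rhalf :: "'a::field" and n1 n2 :: nat
  assumes rhalf: "rhalf \<noteq> 0"
  defines "N \<equiv> 2 * (n1 + 1) * (n2 + 1)"
  shows "leg13 2 (n1 + 1) (n2 + 1) (Rhat rhalf 1 n2) * leg23 2 (Rhat rhalf n1 n2) =
      mat_diag N (\<lambda>s. Rhat_diag rhalf (n1 + 1) n2
        (fuse_index n1 (s div (n2 + 1)) * (n2 + 1) + s mod (n2 + 1)))" (is "?A * ?B = ?D")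
    and "leg23 2 (Rhat rhalf n1 n2) * leg13 2 (n1 + 1) (n2 + 1) (Rhat rhalf 1 n2) =
      mat_diag N (\<lambda>s. Rhat_diag rhalf (n1 + 1) n2
        (fuse_index n1 (s div (n2 + 1)) * (n2 + 1) + s mod (n2 + 1)))"
proof -
  have "leg13 2 (n1 + 1) (n2 + 1) (Rhat rhalf 1 n2) =
      mat_diag N (\<lambda>s. Rhat_diag rhalf 1 n2 (s div ((n1 + 1) * (n2 + 1)) * (n2 + 1) + s mod (n2 + 1)))"
    unfolding Rhat_eq_mat_diag[of rhalf 1 n2, unfolded one_add_one] N_def
    by (rule leg13_mat_diag)
  moreover have "leg23 2 (Rhat rhalf n1 n2) =
      mat_diag N (\<lambda>s. Rhat_diag rhalf n1 n2 (s mod ((n1 + 1) * (n2 + 1))))"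
    by (simp add: leg23_def Rhat_eq_mat_diag kron_one_mat_diag N_def mult.assoc)
  moreover have "Rhat_diag rhalf 1 n2 (s div ((n1 + 1) * (n2 + 1)) * (n2 + 1) + s mod (n2 + 1)) *
      Rhat_diag rhalf n1 n2 (s mod ((n1 + 1) * (n2 + 1))) =
      Rhat_diag rhalf (n1 + 1) n2 (fuse_index n1 (s div (n2 + 1)) * (n2 + 1) + s mod (n2 + 1))"
    if "s < N" for s
  proof -
    obtain e i k where "i < n1 + 1" and k: "k < n2 + 1"
      and s: "s = e * ((n1 + 1) * (n2 + 1)) + i * (n2 + 1) + k"
      using less_mult3_cases \<open>s < N\<close> unfolding N_def by blast
    have "fuse_index n1 (s div (n2 + 1)) = e + i"
      unfolding s div_mod_index3(1)[OF \<open>i < n1 + 1\<close> k] fuse_index_def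
        div_mod_index2[OF \<open>i < n1 + 1\<close>] ..
    then show ?thesis
      unfolding s div_mod_index3[OF \<open>i < n1 + 1\<close> k]
      by (simp only: Rhat_diag_index[OF k refl] power_int_wt_fuse(1)[OF rhalf])
  qed
  ultimately show "?A * ?B = ?D" "?B * ?A = ?D"
    by (simp_all add: mult.commute cong: mat_diag_cong)
qed

lemma leg12_Rhat_mult_leg13_Rhat:
  fixes rhalf :: "'a::field" and n1 n2 :: nat
  assumes rhalf: "rhalf \<noteq> 0"
  defines "N \<equiv> (n1 + 1) * 2 * (n2 + 1)"
  shows "leg12 (n2 + 1) (Rhat rhalf n1 1) * leg13 (n1 + 1) 2 (n2 + 1) (Rhat rhalf n1 n2) =
      mat_diag N (\<lambda>s. Rhat_diag rhalf n1 (n2 + 1)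
        (s div (2 * (n2 + 1)) * (n2 + 2) + fuse_index n2 (s mod (2 * (n2 + 1)))))" (is "?A * ?B = ?D")
    and "leg13 (n1 + 1) 2 (n2 + 1) (Rhat rhalf n1 n2) * leg12 (n2 + 1) (Rhat rhalf n1 1) =
      mat_diag N (\<lambda>s. Rhat_diag rhalf n1 (n2 + 1)
        (s div (2 * (n2 + 1)) * (n2 + 2) + fuse_index n2 (s mod (2 * (n2 + 1)))))"
proof -
  have "leg12 (n2 + 1) (Rhat rhalf n1 1) = mat_diag N (\<lambda>s. Rhat_diag rhalf n1 1 (s div (n2 + 1)))"
    unfolding Rhat_eq_mat_diag[of rhalf n1 1, unfolded one_add_one] N_def leg12_def
    by (rule kron_mat_diag_one)
  moreover have "leg13 (n1 + 1) 2 (n2 + 1) (Rhat rhalf n1 n2) =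
      mat_diag N (\<lambda>s. Rhat_diag rhalf n1 n2 (s div (2 * (n2 + 1)) * (n2 + 1) + s mod (n2 + 1)))"
    unfolding Rhat_eq_mat_diag N_def by (rule leg13_mat_diag)
  moreover have "Rhat_diag rhalf n1 1 (s div (n2 + 1)) *
      Rhat_diag rhalf n1 n2 (s div (2 * (n2 + 1)) * (n2 + 1) + s mod (n2 + 1)) =
      Rhat_diag rhalf n1 (n2 + 1) (s div (2 * (n2 + 1)) * (n2 + 2) + fuse_index n2 (s mod (2 * (n2 + 1))))"
    if "s < N" for s
  proof -
    obtain i e k where "e < 2" and k: "k < n2 + 1"
      and s: "s = i * (2 * (n2 + 1)) + e * (n2 + 1) + k"
      using less_mult3_cases \<open>s < N\<close> unfolding N_def by blast
    have "fuse_index n2 (s mod (2 * (n2 + 1))) = e + k"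
      unfolding s div_mod_index3(4)[OF \<open>e < 2\<close> k] fuse_index_def div_mod_index2[OF k] ..
    moreover have "e + k < n2 + 2"
      using \<open>e < 2\<close> k by simp
    ultimately show ?thesis
      unfolding s div_mod_index3[OF \<open>e < 2\<close> k]
      by (simp only: Rhat_diag_index[OF k refl] Rhat_diag_index[OF \<open>e < 2\<close>, of 1]
          Rhat_diag_index[of "e + k" "n2 + 2" "n2 + 1"] power_int_wt_fuse(2)[OF rhalf])
  qed
  ultimately show "?A * ?B = ?D" "?B * ?A = ?D"
    by (simp_all add: mult.commute cong: mat_diag_cong)
qed

context
  fixes q :: "'a::field_char_0"
  assumes q_nz: "q \<noteq> 0" and q_not_root: "\<And>k. k > 0 \<Longrightarrow> q ^ k \<noteq> 1"
begin

lemma q_minus_inverse_nonzero: "q - inverse q \<noteq> 0"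
proof
  assume "q - inverse q = 0"
  then have "q ^ 2 = 1"
    using q_nz by (simp add: field_simps power2_eq_square)
  then show False
    using q_not_root[of 2] by simp
qed

lemma qnum_add_nonzero:
  assumes "a + b > 0"
  shows "qnum q (int a) + qnum q (int b) \<noteq> 0"
proof
  assume "qnum q (int a) + qnum q (int b) = 0"
  then have "q ^ a - inverse (q ^ a) + (q ^ b - inverse (q ^ b)) = 0"
    using q_minus_inverse_nonzero by (simp add: qnum_of_nat add_divide_distrib[symmetric])
  moreover have "(X - inverse X + (Y - inverse Y)) * (X * Y) = (X + Y) * (X * Y - 1)"
    if "X \<noteq> 0" "Y \<noteq> 0" for X Y :: 'a
    using that by (simp add: field_simps)
  ultimately have "(q ^ a + q ^ b) * (q ^ a * q ^ b - 1) = 0"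
    using q_nz by (metis mult_zero_left power_not_zero)
  moreover have "q ^ a * q ^ b \<noteq> 1"
    using q_not_root[of "a + b"] assms by (simp add: power_add)
  ultimately have sum0: "q ^ a + q ^ b = 0"
    by simp
  obtain k where "q ^ k = -1"
  proof (cases "a \<le> b")
    case True
    with sum0 have "q ^ a * (1 + q ^ (b - a)) = 0"
      by (simp add: distrib_left power_add[symmetric])
    then show ?thesis
      using that q_nz by (simp add: add_eq_0_iff)
  next
    case False
    with sum0 have "q ^ b * (1 + q ^ (a - b)) = 0"
      by (simp add: distrib_left power_add[symmetric] add.commute)
    then show ?thesis
      using that q_nz by (simp add: add_eq_0_iff)
  qed
  then have "q ^ (k * 2) = 1"
    by (simp add: power_mult)
  moreover from \<open>q ^ k = -1\<close> have "k > 0"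
    using one_neq_neg_one by (metis gr0I power_0)
  ultimately show False
    using q_not_root[of "k * 2"] by simp
qed

lemma qnum_nonzero: "m > 0 \<Longrightarrow> qnum q (int m) \<noteq> 0"
  using qnum_add_nonzero[of m 0] by simp

lemma Fmat_index_mult_Emat_index:
  assumes sq: "\<And>x. sq x * sq x = x" and x: "x < n + 2" and y: "y < n + 2" and v: "v < n + 1"
  defines "A \<equiv> qnum q (int n + 1 - int x)" and "B \<equiv> qnum q (int x)"
  shows "Fmat q sq n $$ (x, v) * Emat q sq n $$ (v, y) =
      (if x = y \<and> v = x then A / (A + B) else 0)"
    and "Fmat q sq n $$ (x, (n + 1) + v) * Emat q sq n $$ ((n + 1) + v, y) =
      (if x = y \<and> v = x - 1 then B / (A + B) else 0)"
proof -
  define C where "C = qnum q (int n + 1)"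
  have "C \<noteq> 0"
    using qnum_nonzero[of "n + 1"] by (simp add: C_def add.commute)
  then have "sq C \<noteq> 0"
    using sq by (metis mult_zero_left)
  then have cancel: "sq a * sq C / s * (sq a / sq C) = a / s" for a s
    using sq[of a] by (simp add: field_simps)
  have "Fmat q sq n $$ (x, v) = (if x = v then sq A * sq C / (A + B) else 0)"
    using v x by (auto simp: Fmat_def A_def B_def C_def)
  moreover have "Emat q sq n $$ (v, y) = (if y = v then sq A / sq C else 0)" if "x = v"
    using v y that by (auto simp: Emat_def A_def C_def)
  ultimately have "Fmat q sq n $$ (x, v) * Emat q sq n $$ (v, y) =
      (if x = y \<and> v = x then sq A * sq C / (A + B) * (sq A / sq C) else 0)"
    by auto
  then show "Fmat q sq n $$ (x, v) * Emat q sq n $$ (v, y) =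
      (if x = y \<and> v = x then A / (A + B) else 0)"
    unfolding cancel .
  have "Fmat q sq n $$ (x, (n + 1) + v) = (if x = v + 1 then sq B * sq C / (A + B) else 0)"
    using v x by (auto simp: Fmat_def A_def B_def C_def)
  moreover have "Emat q sq n $$ ((n + 1) + v, y) = (if y = v + 1 then sq B / sq C else 0)"
    if "x = v + 1"
    using v y that by (auto simp: Emat_def B_def C_def)
  \<comment> \<open>for x = 0 the truncated x - 1 is harmless, as then B = 0\<close>
  moreover have "B = 0" and "sq B = 0" if "x = 0"
    using that sq[of 0] by (simp_all add: B_def)
  ultimately have "Fmat q sq n $$ (x, (n + 1) + v) * Emat q sq n $$ ((n + 1) + v, y) =
      (if x = y \<and> v = x - 1 then sq B * sq C / (A + B) * (sq B / sq C) else 0)"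
    by auto
  then show "Fmat q sq n $$ (x, (n + 1) + v) * Emat q sq n $$ ((n + 1) + v, y) =
      (if x = y \<and> v = x - 1 then B / (A + B) else 0)"
    unfolding cancel .
qed

lemma Fmat_mult_Emat:
  assumes sq: "\<And>x. sq x * sq x = x"
  shows "Fmat q sq n * Emat q sq n = 1\<^sub>m (n + 2)"
proof (rule eq_matI)
  fix x y assume "x < dim_row (1\<^sub>m (n + 2) :: 'a mat)" "y < dim_col (1\<^sub>m (n + 2) :: 'a mat)"
  then have x: "x < n + 2" and y: "y < n + 2" by simp_all
  define A where "A = qnum q (int n + 1 - int x)"
  define B where "B = qnum q (int x)"
  note products = Fmat_index_mult_Emat_index[OF sq x y, folded A_def B_def]
  have "(Fmat q sq n * Emat q sq n) $$ (x, y) =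
      (\<Sum>a<2 * (n + 1). Fmat q sq n $$ (x, a) * Emat q sq n $$ (a, y))"
    using x y by (simp add: index_mult_mat_sum Fmat_def Emat_def del: index_mult_mat)
  also have "\<dots> = (\<Sum>u<2. \<Sum>v<n + 1.
      Fmat q sq n $$ (x, u * (n + 1) + v) * Emat q sq n $$ (u * (n + 1) + v, y))"
    by (rule sum_lessThan_mult_nat)
  also have "\<dots> = (\<Sum>v<n + 1. Fmat q sq n $$ (x, v) * Emat q sq n $$ (v, y)) +
      (\<Sum>v<n + 1. Fmat q sq n $$ (x, (n + 1) + v) * Emat q sq n $$ ((n + 1) + v, y))"
    by (simp add: numeral_2_eq_2)
  also have "\<dots> = (\<Sum>v<n + 1. if x = y \<and> v = x then A / (A + B) else 0) +
      (\<Sum>v<n + 1. if x = y \<and> v = x - 1 then B / (A + B) else 0)"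
    by (intro arg_cong2[where f = "(+)"] sum.cong refl) (simp_all only: lessThan_iff products)
  also have "\<dots> = (if x = y then A / (A + B) + B / (A + B) else 0)"
  proof -
    \<comment> \<open>the last row x = n + 1 meets only the second block, but there A = [0] = 0\<close>
    have "x \<le> n \<or> A = 0"
      using x by (cases "x = n + 1") (simp_all add: A_def)
    then show ?thesis
      using x by (cases "x = y") (auto simp del: sum.lessThan_Suc)
  qed
  also have "\<dots> = 1\<^sub>m (n + 2) $$ (x, y)"
  proof -
    have "A + B \<noteq> 0"
      using qnum_add_nonzero[of "n + 1 - x" x] x by (simp add: A_def B_def add.commute)
    then show ?thesis
      using x y by (simp add: add_divide_distrib[symmetric])
  qed
  finally show "(Fmat q sq n * Emat q sq n) $$ (x, y) = 1\<^sub>m (n + 2) $$ (x, y)" .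
qed (simp_all add: Fmat_def Emat_def)

lemma Rhat_fusion_first:
  fixes rhalf :: 'a and n1 n2 :: nat
  assumes sq: "\<And>x. sq x * sq x = x" and rhalf: "rhalf \<noteq> 0"
  defines "F \<equiv> leg12 (n2 + 1) (Fmat q sq n1)" and "E \<equiv> leg12 (n2 + 1) (Emat q sq n1)"
    and "R13 \<equiv> leg13 2 (n1 + 1) (n2 + 1) (Rhat rhalf 1 n2)" and "R23 \<equiv> leg23 2 (Rhat rhalf n1 n2)"
  shows "Rhat rhalf (n1 + 1) n2 = F * R13 * R23 * E" and "Rhat rhalf (n1 + 1) n2 = F * R23 * R13 * E"
proof -
  define N where "N = 2 * (n1 + 1) * (n2 + 1)"
  have F: "F \<in> carrier_mat ((n1 + 2) * (n2 + 1)) N" and E: "E \<in> carrier_mat N ((n1 + 2) * (n2 + 1))"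
    using Fmat_carrier[of q sq n1] Emat_carrier[of q sq n1] by (auto simp: F_def E_def leg12_def N_def)
  have R: "R13 \<in> carrier_mat N N" "R23 \<in> carrier_mat N N"
    using leg13_carrier_mat[of 2 "n1 + 1" "n2 + 1"]
    by (auto simp: R13_def R23_def N_def leg23_def Rhat_eq_mat_diag mult.assoc)
  have FE: "F * E = 1\<^sub>m ((n1 + 2) * (n2 + 1))"
    unfolding F_def E_def leg12_def
    by (simp add: kron_mult[OF Fmat_carrier Emat_carrier one_carrier_mat one_carrier_mat]
        Fmat_mult_Emat[OF sq] kron_one_one)
  have graph: "entries_on_graph E (\<lambda>i. fuse_index n1 (i div (n2 + 1)) * (n2 + 1) + i mod (n2 + 1))"
    unfolding E_def leg12_def by (rule entries_on_graph_kron_one_right[OF entries_on_graph_Emat])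
  have "F * (R13 * R23) * E = F * mat_diag N (\<lambda>i. Rhat_diag rhalf (n1 + 1) n2
      (fuse_index n1 (i div (n2 + 1)) * (n2 + 1) + i mod (n2 + 1))) * E"
    unfolding R13_def R23_def N_def leg13_Rhat_mult_leg23_Rhat(1)[OF rhalf] ..
  also have "\<dots> = mat_diag ((n1 + 2) * (n2 + 1)) (Rhat_diag rhalf (n1 + 1) n2)"
    by (rule left_inverse_mult_mat_diag_comp_mult[OF F E FE graph])
  also have "\<dots> = Rhat rhalf (n1 + 1) n2"
    by (simp add: Rhat_eq_mat_diag)
  finally have fused: "F * (R13 * R23) * E = Rhat rhalf (n1 + 1) n2" .
  have comm: "R23 * R13 = R13 * R23"
    unfolding R13_def R23_def leg13_Rhat_mult_leg23_Rhat[OF rhalf] ..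
  show "Rhat rhalf (n1 + 1) n2 = F * R13 * R23 * E"
    unfolding assoc_mult_mat[OF F R(1) R(2)] by (rule fused[symmetric])
  show "Rhat rhalf (n1 + 1) n2 = F * R23 * R13 * E"
    unfolding assoc_mult_mat[OF F R(2) R(1)] by (subst comm) (rule fused[symmetric])
qed

lemma Rhat_fusion_second:
  fixes rhalf :: 'a and n1 n2 :: nat
  assumes sq: "\<And>x. sq x * sq x = x" and rhalf: "rhalf \<noteq> 0"
  defines "F \<equiv> leg23 (n1 + 1) (Fmat q sq n2)" and "E \<equiv> leg23 (n1 + 1) (Emat q sq n2)"
    and "R12 \<equiv> leg12 (n2 + 1) (Rhat rhalf n1 1)" and "R13 \<equiv> leg13 (n1 + 1) 2 (n2 + 1) (Rhat rhalf n1 n2)"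
  shows "Rhat rhalf n1 (n2 + 1) = F * R12 * R13 * E" and "Rhat rhalf n1 (n2 + 1) = F * R13 * R12 * E"
proof -
  define N where "N = (n1 + 1) * 2 * (n2 + 1)"
  have F: "F \<in> carrier_mat ((n1 + 1) * (n2 + 2)) N" and E: "E \<in> carrier_mat N ((n1 + 1) * (n2 + 2))"
    using Fmat_carrier[of q sq n2] Emat_carrier[of q sq n2]
    by (auto simp: F_def E_def leg23_def N_def mult.assoc)
  have R: "R12 \<in> carrier_mat N N" "R13 \<in> carrier_mat N N"
    using leg13_carrier_mat[of "n1 + 1" 2 "n2 + 1"]
    by (auto simp: R12_def R13_def N_def leg12_def Rhat_eq_mat_diag)
  have FE: "F * E = 1\<^sub>m ((n1 + 1) * (n2 + 2))"
    unfolding F_def E_def leg23_def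
    by (simp add: kron_mult[OF one_carrier_mat one_carrier_mat Fmat_carrier Emat_carrier]
        Fmat_mult_Emat[OF sq] kron_one_one)
  have graph: "entries_on_graph E (\<lambda>i. i div (2 * (n2 + 1)) * (n2 + 2) + fuse_index n2 (i mod (2 * (n2 + 1))))"
    using entries_on_graph_kron_one_left[OF entries_on_graph_Emat[of q sq n2], where p = "n1 + 1"]
    unfolding E_def leg23_def dim_Emat .
  have "F * (R12 * R13) * E = F * mat_diag N (\<lambda>i. Rhat_diag rhalf n1 (n2 + 1)
      (i div (2 * (n2 + 1)) * (n2 + 2) + fuse_index n2 (i mod (2 * (n2 + 1))))) * E"
    unfolding R12_def R13_def N_def leg12_Rhat_mult_leg13_Rhat(1)[OF rhalf] ..
  also have "\<dots> = mat_diag ((n1 + 1) * (n2 + 2)) (Rhat_diag rhalf n1 (n2 + 1))"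
    by (rule left_inverse_mult_mat_diag_comp_mult[OF F E FE graph])
  also have "\<dots> = Rhat rhalf n1 (n2 + 1)"
    by (simp add: Rhat_eq_mat_diag)
  finally have fused: "F * (R12 * R13) * E = Rhat rhalf n1 (n2 + 1)" .
  have comm: "R13 * R12 = R12 * R13"
    unfolding R12_def R13_def leg12_Rhat_mult_leg13_Rhat[OF rhalf] ..
  show "Rhat rhalf n1 (n2 + 1) = F * R12 * R13 * E"
    unfolding assoc_mult_mat[OF F R(1) R(2)] by (rule fused[symmetric])
  show "Rhat rhalf n1 (n2 + 1) = F * R13 * R12 * E"
    unfolding assoc_mult_mat[OF F R(2) R(1)] by (subst comm) (rule fused[symmetric])
qed

end

theorem lemma5p2:
  fixes q rhalf :: "'a::field_char_0" and sq :: "'a \<Rightarrow> 'a" and n1 n2 :: nat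
  assumes all_sqrt: "\<forall>x::'a. \<exists>y. y * y = x"
    and q_nz: "q \<noteq> 0"
    and q_not_root: "\<forall>k::nat. k > 0 \<longrightarrow> q ^ k \<noteq> 1"
    and rhalf: "rhalf * rhalf = q"
    and sq: "\<forall>x. sq x * sq x = x"
    and n1: "n1 \<ge> 1" and n2: "n2 \<ge> 1"
  shows
    "(Rhat rhalf (n1 + 1) n2 =
       leg12 (n2 + 1) (Fmat q sq n1) * leg13 2 (n1 + 1) (n2 + 1) (Rhat rhalf 1 n2)
       * leg23 2 (Rhat rhalf n1 n2) * leg12 (n2 + 1) (Emat q sq n1)) \<and>
    (Rhat rhalf (n1 + 1) n2 =
       leg12 (n2 + 1) (Fmat q sq n1) * leg23 2 (Rhat rhalf n1 n2)
       * leg13 2 (n1 + 1) (n2 + 1) (Rhat rhalf 1 n2) * leg12 (n2 + 1) (Emat q sq n1)) \<and>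
    (Rhat rhalf n1 (n2 + 1) =
       leg23 (n1 + 1) (Fmat q sq n2) * leg12 (n2 + 1) (Rhat rhalf n1 1)
       * leg13 (n1 + 1) 2 (n2 + 1) (Rhat rhalf n1 n2) * leg23 (n1 + 1) (Emat q sq n2)) \<and>
    (Rhat rhalf n1 (n2 + 1) =
       leg23 (n1 + 1) (Fmat q sq n2) * leg13 (n1 + 1) 2 (n2 + 1) (Rhat rhalf n1 n2)
       * leg12 (n2 + 1) (Rhat rhalf n1 1) * leg23 (n1 + 1) (Emat q sq n2))"
proof -
  have "rhalf \<noteq> 0"
    using rhalf q_nz by auto
  note hyps = q_nz q_not_root[rule_format] sq[rule_format] this
  show ?thesis
    using Rhat_fusion_first[OF hyps, of n1 n2] Rhat_fusion_second[OF hyps, of n1 n2] by simp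
qed

end
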